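(* Let $a=(a^1,\ldots,a^M)\in\mathcal{C}^M$, $b=(b^1,\ldots,b^M)\in\mathcal{S}^M$ be type sequences whose FCFS matching $A$ is perfect. Form the exchanged sequences $\tilde{b}^m=b^n$, $\tilde{a}^n=a^m$ for $(m,n)\in A$, and then reverse time, obtaining the block $\overleftarrow{a}=(\tilde{a}^M,\ldots,\tilde{a}^1)$ (customers) and $\overleftarrow{b}=(\tilde{b}^M,\ldots,\tilde{b}^1)$ (servers). Then the FCFS matching of $\overleftarrow{a},\overleftarrow{b}$ is perfect, and for the i.i.d. sequences and any $m\in\mathbb{Z}$, $$P\big((c^{m+1},\ldots,c^{m+M})=\overleftarrow{a},(s^{m+1},\ldots,s^{m+M})=\overleftarrow{b}\mid\text{perfect}\big)=P\big((c^{m+1},\ldots,c^{m+M})=a,(s^{m+1},\ldots,s^{m+M})=b\mid\text{perfect}\big),$$ where "perfect" is the event that the FCFS matching of the two blocks of length $M$ is perfect.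
   Context: Let $\mathcal{C}$ and $\mathcal{S}$ be finite sets of customer and server types and $G=(\mathcal{C},\mathcal{S},\mathcal{E})$ a connected bipartite compatibility graph. $(c^m)_{m\in\mathbb{Z}}$ i.i.d. with law $\alpha$ and $(s^n)_{n\in\mathbb{Z}}$ i.i.d. with law $\beta$, independent, all probabilities positive. The FCFS matching of finite sequences is the unique complete matching (compatible index pairs, each index at most once, no unmatched compatible pair left) such that for every matched $(m,n)$ every compatible earlier server $s^l$, $l<n$, is matched to some customer $c^k$ with $k<m$ and every compatible earlier customer $c^k$, $k<m$, is matched to some $s^l$ with $l<n$; it is perfect if all items are matched. *)

theory Defs
  imports "HOL-Probability.Probability"
begin

definition bip_edge :: "('c \<Rightarrow> 's \<Rightarrow> bool) \<Rightarrow> ('c + 's) \<Rightarrow> ('c + 's) \<Rightarrow> bool" where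
  "bip_edge E u v = (case (u, v) of (Inl x, Inr y) \<Rightarrow> E x y | (Inr y, Inl x) \<Rightarrow> E x y | _ \<Rightarrow> False)"

definition bip_connected :: "('c \<Rightarrow> 's \<Rightarrow> bool) \<Rightarrow> bool" where
  "bip_connected E = (\<forall>u v. (bip_edge E)\<^sup>*\<^sup>* u v)"

text \<open>Matchings of a customer list a with a server list b (0-based indices):
 a set of index pairs (m,n), m indexing customers, n indexing servers.\<close>

definition is_matching :: "('c \<Rightarrow> 's \<Rightarrow> bool) \<Rightarrow> 'c list \<Rightarrow> 's list \<Rightarrow> (nat \<times> nat) set \<Rightarrow> bool" where
  "is_matching E a b A =
     ((\<forall>(m,n)\<in>A. m < length a \<and> n < length b \<and> E (a!m) (b!n)) \<and>
      (\<forall>m n n'. (m,n)\<in>A \<longrightarrow> (m,n')\<in>A \<longrightarrow> n = n') \<and>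
      (\<forall>m m' n. (m,n)\<in>A \<longrightarrow> (m',n)\<in>A \<longrightarrow> m = m'))"

definition is_complete_matching :: "('c \<Rightarrow> 's \<Rightarrow> bool) \<Rightarrow> 'c list \<Rightarrow> 's list \<Rightarrow> (nat \<times> nat) set \<Rightarrow> bool" where
  "is_complete_matching E a b A =
     (is_matching E a b A \<and>
      (\<forall>m n. m < length a \<longrightarrow> n < length b \<longrightarrow> E (a!m) (b!n) \<longrightarrow>
             (\<exists>n'. (m,n')\<in>A) \<or> (\<exists>m'. (m',n)\<in>A)))"

definition is_fcfs_matching :: "('c \<Rightarrow> 's \<Rightarrow> bool) \<Rightarrow> 'c list \<Rightarrow> 's list \<Rightarrow> (nat \<times> nat) set \<Rightarrow> bool" where
  "is_fcfs_matching E a b A =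
     (is_complete_matching E a b A \<and>
      (\<forall>(m,n)\<in>A.
         (\<forall>l<n. E (a!m) (b!l) \<longrightarrow> (\<exists>k<m. (k,l)\<in>A)) \<and>
         (\<forall>k<m. E (a!k) (b!n) \<longrightarrow> (\<exists>l<n. (k,l)\<in>A))))"

definition fcfs_matching :: "('c \<Rightarrow> 's \<Rightarrow> bool) \<Rightarrow> 'c list \<Rightarrow> 's list \<Rightarrow> (nat \<times> nat) set" where
  "fcfs_matching E a b = (THE A. is_fcfs_matching E a b A)"

definition perfect_matching :: "'c list \<Rightarrow> 's list \<Rightarrow> (nat \<times> nat) set \<Rightarrow> bool" where
  "perfect_matching a b A =
     ((\<forall>m<length a. \<exists>n. (m,n)\<in>A) \<and> (\<forall>n<length b. \<exists>m. (m,n)\<in>A))"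

definition fcfs_perfect :: "('c \<Rightarrow> 's \<Rightarrow> bool) \<Rightarrow> 'c list \<Rightarrow> 's list \<Rightarrow> bool" where
  "fcfs_perfect E a b = perfect_matching a b (fcfs_matching E a b)"

text \<open>Exchanged sequences: btil!m = b!n and atil!n = a!m for (m,n) in A.\<close>
definition exch_a :: "'c list \<Rightarrow> (nat \<times> nat) set \<Rightarrow> nat \<Rightarrow> 'c list" where
  "exch_a a A M = map (\<lambda>n. a ! (THE m. (m,n)\<in>A)) [0..<M]"

definition exch_b :: "'s list \<Rightarrow> (nat \<times> nat) set \<Rightarrow> nat \<Rightarrow> 's list" where
  "exch_b b A M = map (\<lambda>m. b ! (THE n. (m,n)\<in>A)) [0..<M]"

definition block_eq :: "(int \<Rightarrow> 'w \<Rightarrow> 'c) \<Rightarrow> (int \<Rightarrow> 'w \<Rightarrow> 's) \<Rightarrow> int \<Rightarrow> nat \<Rightarrow> 'c list \<Rightarrow> 's list \<Rightarrow> 'w \<Rightarrow> bool" where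
  "block_eq c s m M x y \<omega> =
     (map (\<lambda>i. c (m + 1 + int i) \<omega>) [0..<M] = x \<and> map (\<lambda>i. s (m + 1 + int i) \<omega>) [0..<M] = y)"

definition block_perfect :: "('c \<Rightarrow> 's \<Rightarrow> bool) \<Rightarrow> (int \<Rightarrow> 'w \<Rightarrow> 'c) \<Rightarrow> (int \<Rightarrow> 'w \<Rightarrow> 's) \<Rightarrow> int \<Rightarrow> nat \<Rightarrow> 'w \<Rightarrow> bool" where
  "block_perfect E c s m M \<omega> =
     fcfs_perfect E (map (\<lambda>i. c (m + 1 + int i) \<omega>) [0..<M]) (map (\<lambda>i. s (m + 1 + int i) \<omega>) [0..<M])"

end

theory Submission
  imports Defs
begin

text \<open>
  A pair (m,n) enters the FCFS matching exactly when it is compatible and neither m nor n has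
  been matched to a partner of smaller index; this greedy rule determines the matching by
  induction on m + n. For a perfect matching the FCFS property amounts to "no overtaking":
  if an earlier customer is compatible with the server of a later customer, it was itself
  served by an earlier server, and symmetrically for servers. Exchanging the types along the
  matching and reversing time turns matched pairs (m,n) into (M-1-n, M-1-m) and swaps the two
  halves of this condition, so the reversed blocks are again perfectly FCFS matched. Finally
  the reversed blocks are rearrangements of the original ones, and under i.i.d. sampling the
  probability of a block only depends on the multisets of its types.
\<close>

lemma is_matchingD:
  assumes "is_matching E a b A"
  shows is_matching_in_range: "(m,n) \<in> A \<Longrightarrow> m < length a \<and> n < length b \<and> E (a!m) (b!n)"
    and is_matching_unique_server: "(m,n) \<in> A \<Longrightarrow> (m,n') \<in> A \<Longrightarrow> n = n'"
    and is_matching_unique_customer: "(m,n) \<in> A \<Longrightarrow> (m',n) \<in> A \<Longrightarrow> m = m'"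
  using assms unfolding is_matching_def by blast+

lemma is_fcfs_matchingD:
  assumes "is_fcfs_matching E a b A"
  shows is_fcfs_matching_complete: "m < length a \<Longrightarrow> n < length b \<Longrightarrow> E (a!m) (b!n) \<Longrightarrow>
           (\<exists>n'. (m,n') \<in> A) \<or> (\<exists>m'. (m',n) \<in> A)"
    and fcfs_earlier_server: "(m,n) \<in> A \<Longrightarrow> l < n \<Longrightarrow> E (a!m) (b!l) \<Longrightarrow> \<exists>k<m. (k,l) \<in> A"
    and fcfs_earlier_customer: "(m,n) \<in> A \<Longrightarrow> k < m \<Longrightarrow> E (a!k) (b!n) \<Longrightarrow> \<exists>l<n. (k,l) \<in> A"
  using assms unfolding is_fcfs_matching_def is_complete_matching_def by blast+

lemma is_fcfs_matching_is_matching: "is_fcfs_matching E a b A \<Longrightarrow> is_matching E a b A"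
  unfolding is_fcfs_matching_def is_complete_matching_def by blast

definition fcfs_eligible :: "('c \<Rightarrow> 's \<Rightarrow> bool) \<Rightarrow> 'c list \<Rightarrow> 's list \<Rightarrow> (nat \<times> nat) set \<Rightarrow> nat \<Rightarrow> nat \<Rightarrow> bool" where
  "fcfs_eligible E a b A m n \<longleftrightarrow>
     m < length a \<and> n < length b \<and> E (a!m) (b!n) \<and> (\<forall>l<n. (m,l) \<notin> A) \<and> (\<forall>k<m. (k,n) \<notin> A)"

lemma fcfs_eligible_cong:
  assumes "\<And>k l. k + l < m + n \<Longrightarrow> (k,l) \<in> A \<longleftrightarrow> (k,l) \<in> B"
  shows "fcfs_eligible E a b A m n = fcfs_eligible E a b B m n"
  unfolding fcfs_eligible_def using assms by (metis add_less_cancel_left add_less_cancel_right)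

lemma is_fcfs_matching_mem_iff_eligible:
  assumes fcfs: "is_fcfs_matching E a b A"
  shows "(m,n) \<in> A \<longleftrightarrow> fcfs_eligible E a b A m n"
proof
  note matching = is_fcfs_matching_is_matching[OF fcfs]
  assume mn: "(m,n) \<in> A"
  then show "fcfs_eligible E a b A m n"
    using is_matching_in_range[OF matching mn] is_matching_unique_server[OF matching mn]
      is_matching_unique_customer[OF matching mn]
    unfolding fcfs_eligible_def by blast
next
  assume eligible: "fcfs_eligible E a b A m n"
  then consider n' where "(m,n') \<in> A" | m' where "(m',n) \<in> A"
    using is_fcfs_matching_complete[OF fcfs] unfolding fcfs_eligible_def by blast
  then show "(m,n) \<in> A"
  proof cases
    case (1 n')
    \<comment> \<open>for n < n' the FCFS rule at (m,n') would match n to a customer before m\<close>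
    then have "\<not> n < n'"
      using fcfs_earlier_server[OF fcfs] eligible unfolding fcfs_eligible_def by blast
    moreover have "\<not> n' < n"
      using 1 eligible unfolding fcfs_eligible_def by blast
    ultimately show ?thesis using 1 by simp
  next
    case (2 m')
    then have "\<not> m < m'"
      using fcfs_earlier_customer[OF fcfs] eligible unfolding fcfs_eligible_def by blast
    moreover have "\<not> m' < m"
      using 2 eligible unfolding fcfs_eligible_def by blast
    ultimately show ?thesis using 2 by simp
  qed
qed

lemma eligible_fixpoint_is_fcfs_matching:
  assumes fixpoint: "\<And>m n. (m,n) \<in> A \<longleftrightarrow> fcfs_eligible E a b A m n"
  shows "is_fcfs_matching E a b A"
proof -
  have "n = n'" if "(m,n) \<in> A" "(m,n') \<in> A" for m n n'
    using fixpoint[of m n] fixpoint[of m n'] that unfolding fcfs_eligible_def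
    by (metis linorder_neqE_nat)
  moreover have "m = m'" if "(m,n) \<in> A" "(m',n) \<in> A" for m m' n
    using fixpoint[of m n] fixpoint[of m' n] that unfolding fcfs_eligible_def
    by (metis linorder_neqE_nat)
  moreover have "m < length a \<and> n < length b \<and> E (a!m) (b!n)" if "(m,n) \<in> A" for m n
    using fixpoint[of m n] that unfolding fcfs_eligible_def by blast
  moreover have "(\<exists>n'. (m,n') \<in> A) \<or> (\<exists>m'. (m',n) \<in> A)"
    if "m < length a" "n < length b" "E (a!m) (b!n)" for m n
    using fixpoint[of m n] that unfolding fcfs_eligible_def by blast
  moreover have "\<exists>k<m. (k,l) \<in> A" if "(m,n) \<in> A" "l < n" "E (a!m) (b!l)" for m n l
    using fixpoint[of m n] fixpoint[of m l] that unfolding fcfs_eligible_def by auto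
  moreover have "\<exists>l<n. (k,l) \<in> A" if "(m,n) \<in> A" "k < m" "E (a!k) (b!n)" for m n k
    using fixpoint[of m n] fixpoint[of k n] that unfolding fcfs_eligible_def by auto
  ultimately show ?thesis
    unfolding is_fcfs_matching_def is_complete_matching_def is_matching_def by blast
qed

lemma eligible_fixpoint_unique:
  assumes "\<And>m n. (m,n) \<in> A \<longleftrightarrow> fcfs_eligible E a b A m n"
    and "\<And>m n. (m,n) \<in> B \<longleftrightarrow> fcfs_eligible E a b B m n"
  shows "A = B"
proof -
  have "(m,n) \<in> A \<longleftrightarrow> (m,n) \<in> B" for m n
  proof (induction "m + n" arbitrary: m n rule: less_induct)
    case less
    have "fcfs_eligible E a b A m n = fcfs_eligible E a b B m n"
      by (rule fcfs_eligible_cong) (rule less)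
    then show ?case by (simp only: assms)
  qed
  then show ?thesis by auto
qed

lemma eligible_fixpoint_exists: "\<exists>A. \<forall>m n. (m,n) \<in> A \<longleftrightarrow> fcfs_eligible E a b A m n"
proof -
  have fixpoint_below: "\<exists>A. (\<forall>(m,n) \<in> A. m + n < d)
      \<and> (\<forall>m n. m + n < d \<longrightarrow> ((m,n) \<in> A \<longleftrightarrow> fcfs_eligible E a b A m n))" for d
  proof (induction d)
    case 0
    show ?case by (rule exI[of _ "{}"]) simp
  next
    case (Suc d)
    then obtain A where bound: "\<forall>(m,n) \<in> A. m + n < d"
      and fixpoint: "\<forall>m n. m + n < d \<longrightarrow> ((m,n) \<in> A \<longleftrightarrow> fcfs_eligible E a b A m n)"
      by blast
    define A' where "A' = A \<union> {(m,n). m + n = d \<and> fcfs_eligible E a b A m n}"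
    have same_below: "(k,l) \<in> A' \<longleftrightarrow> (k,l) \<in> A" if "k + l < d" for k l
      using that by (simp add: A'_def)
    have eligible_A': "fcfs_eligible E a b A' m n = fcfs_eligible E a b A m n" if "m + n \<le> d" for m n
      using that by (intro fcfs_eligible_cong same_below) linarith
    have "(m,n) \<in> A' \<longleftrightarrow> fcfs_eligible E a b A' m n" if "m + n < Suc d" for m n
    proof (cases "m + n < d")
      case True
      then show ?thesis using fixpoint eligible_A' same_below by simp
    next
      case False
      then have "(m,n) \<notin> A" using bound by auto
      with False that show ?thesis using eligible_A' by (simp add: A'_def)
    qed
    moreover have "\<forall>(m,n) \<in> A'. m + n < Suc d"
      using bound by (auto simp: A'_def)
    ultimately have "(\<forall>(m,n) \<in> A'. m + n < Suc d)
        \<and> (\<forall>m n. m + n < Suc d \<longrightarrow> ((m,n) \<in> A' \<longleftrightarrow> fcfs_eligible E a b A' m n))"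
      by blast
    then show ?case by blast
  qed
  obtain A where bound: "\<forall>(m,n) \<in> A. m + n < length a + length b"
    and fixpoint: "\<forall>m n. m + n < length a + length b \<longrightarrow> ((m,n) \<in> A \<longleftrightarrow> fcfs_eligible E a b A m n)"
    using fixpoint_below[of "length a + length b"] by blast
  have "(m,n) \<in> A \<longleftrightarrow> fcfs_eligible E a b A m n" for m n
  proof (cases "m + n < length a + length b")
    case True
    then show ?thesis using fixpoint by blast
  next
    case False
    then show ?thesis using bound unfolding fcfs_eligible_def by auto
  qed
  then show ?thesis by blast
qed

lemma ex1_fcfs_matching: "\<exists>!A. is_fcfs_matching E a b A"
proof -
  obtain A where fixpoint: "\<And>m n. (m,n) \<in> A \<longleftrightarrow> fcfs_eligible E a b A m n"
    using eligible_fixpoint_exists by blast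
  show ?thesis
  proof (rule ex1I)
    show "is_fcfs_matching E a b A"
      using fixpoint by (rule eligible_fixpoint_is_fcfs_matching)
  next
    fix B assume "is_fcfs_matching E a b B"
    then show "B = A"
      by (rule eligible_fixpoint_unique[OF is_fcfs_matching_mem_iff_eligible fixpoint])
  qed
qed

lemma is_fcfs_matching_fcfs_matching: "is_fcfs_matching E a b (fcfs_matching E a b)"
  unfolding fcfs_matching_def using ex1_fcfs_matching by (rule theI')

lemma fcfs_matching_eqI: "is_fcfs_matching E a b A \<Longrightarrow> fcfs_matching E a b = A"
  unfolding fcfs_matching_def using ex1_fcfs_matching by (rule the1_equality)

definition no_overtaking :: "('c \<Rightarrow> 's \<Rightarrow> bool) \<Rightarrow> 'c list \<Rightarrow> 's list \<Rightarrow> (nat \<times> nat) set \<Rightarrow> bool" where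
  "no_overtaking E a b A \<longleftrightarrow>
     (\<forall>(m,n) \<in> A. \<forall>(m',n') \<in> A.
        (m < m' \<and> E (a!m) (b!n') \<longrightarrow> n < n') \<and> (n < n' \<and> E (a!m') (b!n) \<longrightarrow> m < m'))"

lemma is_fcfs_matching_no_overtaking:
  assumes fcfs: "is_fcfs_matching E a b A"
  shows "no_overtaking E a b A"
proof -
  note matching = is_fcfs_matching_is_matching[OF fcfs]
  have "n < n'" if mn: "(m,n) \<in> A" and mn': "(m',n') \<in> A" and "m < m'" "E (a!m) (b!n')" for m n m' n'
  proof (rule ccontr)
    assume "\<not> n < n'"
    moreover have "n \<noteq> n'"
      using is_matching_unique_customer[OF matching mn] mn' \<open>m < m'\<close> by blast
    ultimately have "n' < n" by simp
    then obtain k where "k < m" "(k,n') \<in> A"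
      using fcfs_earlier_server[OF fcfs mn] \<open>E (a!m) (b!n')\<close> by blast
    then show False
      using is_matching_unique_customer[OF matching mn'] \<open>m < m'\<close> by fastforce
  qed
  moreover have "m < m'" if mn: "(m,n) \<in> A" and mn': "(m',n') \<in> A" and "n < n'" "E (a!m') (b!n)" for m n m' n'
  proof (rule ccontr)
    assume "\<not> m < m'"
    moreover have "m \<noteq> m'"
      using is_matching_unique_server[OF matching mn] mn' \<open>n < n'\<close> by blast
    ultimately have "m' < m" by simp
    then obtain l where "l < n" "(m',l) \<in> A"
      using fcfs_earlier_customer[OF fcfs mn] \<open>E (a!m') (b!n)\<close> by blast
    then show False
      using is_matching_unique_server[OF matching mn'] \<open>n < n'\<close> by fastforce
  qed
  ultimately show ?thesis
    unfolding no_overtaking_def by blast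
qed

lemma no_overtaking_perfect_is_fcfs_matching:
  assumes matching: "is_matching E a b A" and perfect: "perfect_matching a b A"
    and order: "no_overtaking E a b A"
  shows "is_fcfs_matching E a b A"
proof -
  have "\<exists>k<m. (k,l) \<in> A" if mn: "(m,n) \<in> A" and "l < n" "E (a!m) (b!l)" for m n l
  proof -
    have "l < length b"
      using is_matching_in_range[OF matching mn] \<open>l < n\<close> by simp
    then obtain k where "(k,l) \<in> A"
      using perfect unfolding perfect_matching_def by blast
    then show ?thesis
      using order mn that unfolding no_overtaking_def by blast
  qed
  moreover have "\<exists>l<n. (k,l) \<in> A" if mn: "(m,n) \<in> A" and "k < m" "E (a!k) (b!n)" for m n k
  proof -
    have "k < length a"
      using is_matching_in_range[OF matching mn] \<open>k < m\<close> by simp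
    then obtain l where "(k,l) \<in> A"
      using perfect unfolding perfect_matching_def by blast
    then show ?thesis
      using order mn that unfolding no_overtaking_def by blast
  qed
  moreover have "is_complete_matching E a b A"
    using matching perfect unfolding is_complete_matching_def perfect_matching_def by blast
  ultimately show ?thesis
    unfolding is_fcfs_matching_def by blast
qed

lemma is_matching_converse: "is_matching E a b A \<Longrightarrow> is_matching (\<lambda>y x. E x y) b a (A\<inverse>)"
  unfolding is_matching_def by auto

lemma perfect_matching_converse: "perfect_matching a b A \<Longrightarrow> perfect_matching b a (A\<inverse>)"
  unfolding perfect_matching_def by auto

lemma exch_b_eq_exch_a_converse: "exch_b b A M = exch_a b (A\<inverse>) M"
  unfolding exch_a_def exch_b_def by simp

lemma length_exch_a [simp]: "length (exch_a a A M) = M"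
  by (simp add: exch_a_def)

lemma length_exch_b [simp]: "length (exch_b b A M) = M"
  by (simp add: exch_b_def)

lemma nth_rev_exch_a:
  assumes matching: "is_matching E a b A" and "(m,n) \<in> A" and "length b = M"
  shows "rev (exch_a a A M) ! (M - 1 - n) = a ! m"
proof -
  have "n < M"
    using is_matching_in_range[OF matching \<open>(m,n) \<in> A\<close>] \<open>length b = M\<close> by simp
  moreover have "(THE m'. (m',n) \<in> A) = m"
    using \<open>(m,n) \<in> A\<close> is_matching_unique_customer[OF matching] by blast
  ultimately show ?thesis
    by (simp add: exch_a_def rev_nth Suc_diff_Suc)
qed

lemma nth_rev_exch_b:
  assumes "is_matching E a b A" and "(m,n) \<in> A" and "length a = M"
  shows "rev (exch_b b A M) ! (M - 1 - m) = b ! n"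
  using nth_rev_exch_a[OF is_matching_converse[OF assms(1)]] assms(2,3)
  by (simp add: exch_b_eq_exch_a_converse)

lemma mset_map_nth_bij_betw:
  assumes "bij_betw h {..<length xs} {..<length xs}"
  shows "mset (map (\<lambda>i. xs ! h i) [0..<length xs]) = mset xs"
proof -
  have "mset (map (\<lambda>i. xs ! h i) [0..<length xs])
      = image_mset ((!) xs) (image_mset h (mset_set {..<length xs}))"
    by (simp add: atLeast0LessThan multiset.map_comp comp_def)
  also have "image_mset h (mset_set {..<length xs}) = mset_set {..<length xs}"
    using assms by (simp add: image_mset_mset_set bij_betw_def)
  also have "image_mset ((!) xs) (mset_set {..<length xs}) = mset xs"
    by (metis atLeast0LessThan map_nth mset_map mset_upt)
  finally show ?thesis .
qed

lemma mset_exch_a: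
  assumes matching: "is_matching E a b A" and perfect: "perfect_matching a b A"
    and "length a = M" and "length b = M"
  shows "mset (exch_a a A M) = mset a"
proof -
  define partner where "partner n = (THE m. (m,n) \<in> A)" for n
  have partner: "(partner n, n) \<in> A" if n: "n < M" for n
  proof -
    obtain m where mn: "(m,n) \<in> A"
      using perfect n \<open>length b = M\<close> unfolding perfect_matching_def by blast
    show ?thesis
      unfolding partner_def by (rule theI[where P = "\<lambda>m. (m,n) \<in> A", OF mn])
        (use is_matching_unique_customer[OF matching mn] in blast)
  qed
  have "bij_betw partner {..<M} {..<M}"
  proof (rule bij_betwI')
    show "partner n = partner n' \<longleftrightarrow> n = n'" if "n \<in> {..<M}" "n' \<in> {..<M}" for n n'
      using partner[of n] partner[of n'] that is_matching_unique_server[OF matching, of "partner n" n n']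
      by auto
    show "partner n \<in> {..<M}" if "n \<in> {..<M}" for n
      using is_matching_in_range[OF matching partner] that \<open>length a = M\<close> by auto
    show "\<exists>n\<in>{..<M}. m = partner n" if m: "m \<in> {..<M}" for m
    proof -
      obtain n where mn: "(m,n) \<in> A"
        using perfect m \<open>length a = M\<close> unfolding perfect_matching_def by blast
      then have "n < M"
        using is_matching_in_range[OF matching] \<open>length b = M\<close> by blast
      moreover have "m = partner n"
        using is_matching_unique_customer[OF matching mn partner[OF \<open>n < M\<close>]] .
      ultimately show ?thesis by blast
    qed
  qed
  then show ?thesis
    using mset_map_nth_bij_betw[of partner a] \<open>length a = M\<close>
    by (simp add: exch_a_def partner_def)
qed

lemma mset_exch_b:
  assumes "is_matching E a b A" and "perfect_matching a b A"
    and "length a = M" and "length b = M"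
  shows "mset (exch_b b A M) = mset b"
  using mset_exch_a[OF is_matching_converse perfect_matching_converse] assms
  by (simp add: exch_b_eq_exch_a_converse)

definition reversed_matching :: "nat \<Rightarrow> (nat \<times> nat) set \<Rightarrow> (nat \<times> nat) set" where
  "reversed_matching M A = (\<lambda>(m,n). (M - 1 - n, M - 1 - m)) ` A"

lemma mem_reversed_matching_iff:
  "(i,j) \<in> reversed_matching M A \<longleftrightarrow> (\<exists>m n. (m,n) \<in> A \<and> i = M - 1 - n \<and> j = M - 1 - m)"
  unfolding reversed_matching_def by auto

lemma is_matching_reversed_matching:
  assumes matching: "is_matching E a b A" and la: "length a = M" and lb: "length b = M"
  shows "is_matching E (rev (exch_a a A M)) (rev (exch_b b A M)) (reversed_matching M A)"
proof -
  have range: "m < M \<and> n < M" if "(m,n) \<in> A" for m n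
    using is_matching_in_range[OF matching that] la lb by auto
  have rev_inj: "M - 1 - k = M - 1 - k' \<Longrightarrow> k < M \<Longrightarrow> k' < M \<Longrightarrow> k = k'" for k k'
    by linarith
  show ?thesis
    unfolding is_matching_def
  proof (intro conjI allI impI ballI)
    fix p assume "p \<in> reversed_matching M A"
    then obtain m n where p: "p = (M - 1 - n, M - 1 - m)" and mn: "(m,n) \<in> A"
      unfolding reversed_matching_def by auto
    show "case p of (i,j) \<Rightarrow> i < length (rev (exch_a a A M)) \<and> j < length (rev (exch_b b A M))
        \<and> E (rev (exch_a a A M) ! i) (rev (exch_b b A M) ! j)"
      using range[OF mn] is_matching_in_range[OF matching mn] p
        nth_rev_exch_a[OF matching mn lb] nth_rev_exch_b[OF matching mn la] by auto
  next
    show "j = j'" if "(i,j) \<in> reversed_matching M A" "(i,j') \<in> reversed_matching M A" for i j j'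
      using that range rev_inj is_matching_unique_customer[OF matching]
      unfolding mem_reversed_matching_iff by metis
    show "i = i'" if "(i,j) \<in> reversed_matching M A" "(i',j) \<in> reversed_matching M A" for i i' j
      using that range rev_inj is_matching_unique_server[OF matching]
      unfolding mem_reversed_matching_iff by metis
  qed
qed

lemma perfect_reversed_matching:
  assumes perfect: "perfect_matching a b A" and "length a = M" and "length b = M"
  shows "perfect_matching (rev (exch_a a A M)) (rev (exch_b b A M)) (reversed_matching M A)"
  unfolding perfect_matching_def
proof (intro conjI allI impI)
  fix i assume "i < length (rev (exch_a a A M))"
  then have "i < M" by simp
  then have "M - 1 - i < length b" using \<open>length b = M\<close> by simp
  then obtain m where "(m, M - 1 - i) \<in> A"
    using perfect unfolding perfect_matching_def by blast
  moreover have "M - 1 - (M - 1 - i) = i" using \<open>i < M\<close> by simp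
  ultimately show "\<exists>j. (i,j) \<in> reversed_matching M A"
    unfolding mem_reversed_matching_iff by metis
next
  fix j assume "j < length (rev (exch_b b A M))"
  then have "j < M" by simp
  then have "M - 1 - j < length a" using \<open>length a = M\<close> by simp
  then obtain n where "(M - 1 - j, n) \<in> A"
    using perfect unfolding perfect_matching_def by blast
  moreover have "M - 1 - (M - 1 - j) = j" using \<open>j < M\<close> by simp
  ultimately show "\<exists>i. (i,j) \<in> reversed_matching M A"
    unfolding mem_reversed_matching_iff by metis
qed

lemma no_overtaking_reversed_matching:
  assumes matching: "is_matching E a b A" and order: "no_overtaking E a b A"
    and la: "length a = M" and lb: "length b = M"
  defines "x \<equiv> rev (exch_a a A M)" and "y \<equiv> rev (exch_b b A M)"
  shows "no_overtaking E x y (reversed_matching M A)"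
proof -
  have "(i < i' \<and> E (x!i) (y!j') \<longrightarrow> j < j') \<and> (j < j' \<and> E (x!i') (y!j) \<longrightarrow> i < i')"
    if pairs: "(i,j) \<in> reversed_matching M A" "(i',j') \<in> reversed_matching M A" for i j i' j'
  proof -
    obtain m n m' n' where mn: "(m,n) \<in> A" and mn': "(m',n') \<in> A"
      and ij: "i = M - 1 - n" "j = M - 1 - m" "i' = M - 1 - n'" "j' = M - 1 - m'"
      using pairs unfolding mem_reversed_matching_iff by blast
    have "i < i' \<longleftrightarrow> n' < n" "j < j' \<longleftrightarrow> m' < m"
      using is_matching_in_range[OF matching mn] is_matching_in_range[OF matching mn'] ij assms
      by auto
    moreover have "x!i = a!m" "x!i' = a!m'" "y!j = b!n" "y!j' = b!n'"
      unfolding x_def y_def ij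
      using nth_rev_exch_a[OF matching mn lb] nth_rev_exch_a[OF matching mn' lb]
        nth_rev_exch_b[OF matching mn la] nth_rev_exch_b[OF matching mn' la] by simp_all
    moreover have "(m' < m \<and> E (a!m') (b!n) \<longrightarrow> n' < n) \<and> (n' < n \<and> E (a!m) (b!n') \<longrightarrow> m' < m)"
      using order mn mn' unfolding no_overtaking_def by blast
    ultimately show ?thesis by simp
  qed
  then show ?thesis
    unfolding no_overtaking_def by blast
qed

lemma is_fcfs_matching_reversed_matching:
  assumes fcfs: "is_fcfs_matching E a b A" and "perfect_matching a b A"
    and "length a = M" and "length b = M"
  shows "is_fcfs_matching E (rev (exch_a a A M)) (rev (exch_b b A M)) (reversed_matching M A)"
  using assms is_fcfs_matching_is_matching[OF fcfs] is_fcfs_matching_no_overtaking[OF fcfs]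
  by (intro no_overtaking_perfect_is_fcfs_matching is_matching_reversed_matching
      perfect_reversed_matching no_overtaking_reversed_matching)

lemma (in prob_space) prob_indep_vars_eq:
  assumes indep: "indep_vars (\<lambda>_. count_space UNIV) X I" and "J \<subseteq> I" and "finite J"
  shows "prob {\<omega> \<in> space M. \<forall>j\<in>J. X j \<omega> = v j} = (\<Prod>j\<in>J. prob {\<omega> \<in> space M. X j \<omega> = v j})"
proof (cases "J = {}")
  case True
  then show ?thesis by (simp add: prob_space)
next
  case False
  have "indep_sets (\<lambda>i. {X i -` A \<inter> space M | A. A \<in> sets (count_space UNIV)}) I"
    using indep unfolding indep_vars_def2 by blast
  then have "prob (\<Inter>j\<in>J. X j -` {v j} \<inter> space M) = (\<Prod>j\<in>J. prob (X j -` {v j} \<inter> space M))"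
    using \<open>J \<subseteq> I\<close> False \<open>finite J\<close> by (intro indep_setsD) auto
  moreover have "{\<omega> \<in> space M. \<forall>j\<in>J. X j \<omega> = v j} = (\<Inter>j\<in>J. X j -` {v j} \<inter> space M)"
    using False by auto
  moreover have "{\<omega> \<in> space M. X j \<omega> = v j} = X j -` {v j} \<inter> space M" for j
    by auto
  ultimately show ?thesis by simp
qed

lemma (in prob_space) prob_block_eq:
  fixes c :: "int \<Rightarrow> 'a \<Rightarrow> 'c" and s :: "int \<Rightarrow> 'a \<Rightarrow> 's"
  assumes indep: "indep_vars (\<lambda>_. count_space UNIV)
                  (\<lambda>i. case i of Inl k \<Rightarrow> (\<lambda>\<omega>. Inl (c k \<omega>) :: 'c + 's)
                                | Inr k \<Rightarrow> (\<lambda>\<omega>. Inr (s k \<omega>))) UNIV"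
    and law_c: "\<And>k x. prob {\<omega> \<in> space M. c k \<omega> = x} = \<alpha> x"
    and law_s: "\<And>k y. prob {\<omega> \<in> space M. s k \<omega> = y} = \<beta> y"
    and "length x = N" and "length y = N"
  shows "prob {\<omega> \<in> space M. block_eq c s m N x y \<omega>} = prod_list (map \<alpha> x) * prod_list (map \<beta> y)"
proof -
  define K where "K = (\<lambda>i. m + 1 + int i) ` {..<N}"
  define v :: "int + int \<Rightarrow> 'c + 's" where
    "v j = (case j of Inl k \<Rightarrow> Inl (x ! nat (k - m - 1)) | Inr k \<Rightarrow> Inr (y ! nat (k - m - 1)))" for j
  let ?X = "\<lambda>i. case i of Inl k \<Rightarrow> (\<lambda>\<omega>. Inl (c k \<omega>) :: 'c + 's) | Inr k \<Rightarrow> (\<lambda>\<omega>. Inr (s k \<omega>))"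
  have "block_eq c s m N x y \<omega> \<longleftrightarrow> (\<forall>j\<in>K <+> K. ?X j \<omega> = v j)" for \<omega>
    unfolding block_eq_def K_def v_def using \<open>length x = N\<close> \<open>length y = N\<close>
    by (auto simp: list_eq_iff_nth_eq Plus_def ball_Un)
  then have "prob {\<omega> \<in> space M. block_eq c s m N x y \<omega>}
      = (\<Prod>j\<in>K <+> K. prob {\<omega> \<in> space M. ?X j \<omega> = v j})"
    using prob_indep_vars_eq[OF indep, of "K <+> K" v] by (simp add: K_def)
  also have "\<dots> = (\<Prod>k\<in>K. \<alpha> (x ! nat (k - m - 1))) * (\<Prod>k\<in>K. \<beta> (y ! nat (k - m - 1)))"
    by (simp add: prod.Plus K_def v_def law_c law_s comp_def)
  also have "\<dots> = (\<Prod>i<N. \<alpha> (x ! i)) * (\<Prod>i<N. \<beta> (y ! i))"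
    unfolding K_def by (subst (1 2) prod.reindex) (auto simp: inj_on_def)
  also have "\<dots> = prod_list (map \<alpha> x) * prod_list (map \<beta> y)"
    using \<open>length x = N\<close> \<open>length y = N\<close> by (simp add: prod.list_conv_set_nth atLeast0LessThan)
  finally show ?thesis .
qed

lemma block_eq_imp_block_perfect:
  "fcfs_perfect E x y \<Longrightarrow> block_eq c s m M x y \<omega> \<Longrightarrow> block_perfect E c s m M \<omega>"
  unfolding block_eq_def block_perfect_def by simp

theorem corollary4p1:
  fixes E :: "'c::finite \<Rightarrow> 's::finite \<Rightarrow> bool"
    and P :: "'w measure"
    and c :: "int \<Rightarrow> 'w \<Rightarrow> 'c" and s :: "int \<Rightarrow> 'w \<Rightarrow> 's"
    and \<alpha> :: "'c \<Rightarrow> real" and \<beta> :: "'s \<Rightarrow> real"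
    and a :: "'c list" and b :: "'s list" and M :: nat and m :: int
  assumes conn: "bip_connected E"
    and ps: "prob_space P"
    and indep: "prob_space.indep_vars P (\<lambda>_. count_space UNIV)
                  (\<lambda>i. case i of Inl k \<Rightarrow> (\<lambda>\<omega>. Inl (c k \<omega>) :: 'c + 's)
                                | Inr k \<Rightarrow> (\<lambda>\<omega>. Inr (s k \<omega>))) (UNIV :: (int + int) set)"
    and law_c: "\<And>k x. measure P {\<omega> \<in> space P. c k \<omega> = x} = \<alpha> x"
    and law_s: "\<And>k y. measure P {\<omega> \<in> space P. s k \<omega> = y} = \<beta> y"
    and pos_a: "\<And>x. \<alpha> x > 0" and pos_b: "\<And>y. \<beta> y > 0"
    and len_a: "length a = M" and len_b: "length b = M"
    and perf: "fcfs_perfect E a b"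
  shows "fcfs_perfect E (rev (exch_a a (fcfs_matching E a b) M)) (rev (exch_b b (fcfs_matching E a b) M))
    \<and> measure P {\<omega> \<in> space P. block_eq c s m M (rev (exch_a a (fcfs_matching E a b) M))
                                               (rev (exch_b b (fcfs_matching E a b) M)) \<omega>
                                 \<and> block_perfect E c s m M \<omega>}
        / measure P {\<omega> \<in> space P. block_perfect E c s m M \<omega>}
      = measure P {\<omega> \<in> space P. block_eq c s m M a b \<omega> \<and> block_perfect E c s m M \<omega>}
        / measure P {\<omega> \<in> space P. block_perfect E c s m M \<omega>}"
proof -
  \<comment> \<open>The numerators agree outright.\<close>
  interpret prob_space P by (rule ps)
  define A where "A = fcfs_matching E a b"
  define x where "x = rev (exch_a a A M)"
  define y where "y = rev (exch_b b A M)"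
  have fcfs: "is_fcfs_matching E a b A"
    unfolding A_def by (rule is_fcfs_matching_fcfs_matching)
  have perfect: "perfect_matching a b A"
    using perf unfolding fcfs_perfect_def A_def .
  have "fcfs_matching E x y = reversed_matching M A"
    unfolding x_def y_def
    by (intro fcfs_matching_eqI is_fcfs_matching_reversed_matching fcfs perfect len_a len_b)
  then have perf_xy: "fcfs_perfect E x y"
    unfolding fcfs_perfect_def x_def y_def using perfect_reversed_matching perfect len_a len_b by simp
  have "mset x = mset a" "mset y = mset b"
    unfolding x_def y_def using is_fcfs_matching_is_matching[OF fcfs] perfect len_a len_b
    by (simp_all add: mset_exch_a mset_exch_b)
  then have "prod_list (map \<alpha> x) * prod_list (map \<beta> y) = prod_list (map \<alpha> a) * prod_list (map \<beta> b)"
    by (metis mset_map prod_mset_prod_list)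
  moreover have "{\<omega> \<in> space P. block_eq c s m M x' y' \<omega> \<and> block_perfect E c s m M \<omega>}
      = {\<omega> \<in> space P. block_eq c s m M x' y' \<omega>}" if "fcfs_perfect E x' y'" for x' y'
    using block_eq_imp_block_perfect[OF that] by auto
  moreover have "length x = M" "length y = M"
    by (simp_all add: x_def y_def)
  ultimately have "prob {\<omega> \<in> space P. block_eq c s m M x y \<omega> \<and> block_perfect E c s m M \<omega>}
      = prob {\<omega> \<in> space P. block_eq c s m M a b \<omega> \<and> block_perfect E c s m M \<omega>}"
    using perf_xy perf len_a len_b by (simp add: prob_block_eq[OF indep law_c law_s])
  with perf_xy show ?thesis
    unfolding x_def y_def A_def by simp
qed

end
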